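(* Let $M$, $P$, $P'$, $H^{(j)}(\lambda)$, $S$, $U_S$, $Z_a$, $X'_a$ and $Q$ be as in the context. Then $Q$ restricts to $S$, i.e. for every point $p\in S$ and every covector $\alpha\in T^*_pM$ one has $Q(\alpha)\in T_pS$; equivalently $\langle dH^{(b)}_0, Q(\alpha)\rangle=0$ for all $\alpha$ and $b=1,\dots,k$. Moreover all the Hamiltonians $H^{(a)}_l$ are in involution with respect to $Q$: \[ \{H^{(a)}_l,H^{(b)}_m\}_Q:=\langle dH^{(a)}_l, Q\, dH^{(b)}_m\rangle=0 \] for all $a,b\in\{1,\dots,k\}$, $0\le l\le n_a$, $0\le m\le n_b$.
   Context: $M$ is a smooth manifold of dimension $2n+k$ carrying two Poisson tensors $P,P'$ which are compatible, i.e. $P_\lambda=P'-\lambda P$ is a Poisson tensor for every $\lambda$; brackets are $\{f,g\}=\langle df,P\,dg\rangle$, $\{f,g\}'=\langle df,P'dg\rangle$, and a bivector is viewed as a map $T^*M\to TM$. There are $k$ polynomial Casimirs of the pencil $H^{(j)}(\lambda)=\sum_{i=0}^{n_j}H^{(j)}_i\lambda^{n_j-i}$, $j=1,\dots,k$, i.e. $(P'-\lambda P)\,dH^{(j)}(\lambda)=0$ identically in $\lambda$, with $n_1+\dots+n_k=n$ and the differentials $dH^{(j)}_s$ ($j=1,\dots,k$, $s=0,\dots,n_j$) linearly independent at every point. In particular $PdH^{(j)}_0=0$, $P'dH^{(j)}_{n_j}=0$ and $P\,dH^{(j)}_{s+1}=P'dH^{(j)}_s$. $S$ is a symplectic leaf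 of $P$, locally a common level set of $H^{(1)}_0,\dots,H^{(k)}_0$, and $U_S$ is a tubular neighbourhood of $S$. On $U_S$ there are vector fields $Z_1,\dots,Z_k$ spanning a distribution $\mathcal Z$ with $TM=T S'\oplus\mathcal Z$ along each leaf $S'$ of $P$ in $U_S$, normalized by $Z_a(H^{(b)}_0)=\delta_a^b$. Set $X'_a=P'dH^{(a)}_0$ and define the bivector \[ Q=P'-\sum_{a=1}^k X'_a\wedge Z_a,\qquad\text{i.e. } Q(\alpha)=P'(\alpha)+\sum_{a=1}^k\big(\langle\alpha,X'_a\rangle Z_a-\langle\alpha,Z_a\rangle X'_a\big). \] *)

theory Defs
  imports "HOL-Analysis.Analysis"
begin

text \<open>Local model: the (tubular neighbourhood of the) manifold is an open set U of a
Euclidean space 'a.  Tangent vectors are elements of 'a, covectors are linear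
functionals 'a \<Rightarrow> real, the pairing is application.  A bivector field is a map
P :: 'a \<Rightarrow> ('a \<Rightarrow> real) \<Rightarrow> 'a (covector \<mapsto> vector at each point).\<close>

definition dfun :: "('a::euclidean_space \<Rightarrow> real) \<Rightarrow> 'a \<Rightarrow> ('a \<Rightarrow> real)" where
  "dfun f x = frechet_derivative f (at x)"

coinductive smooth_on :: "'a::euclidean_space set \<Rightarrow> ('a \<Rightarrow> real) \<Rightarrow> bool" for U where
  "f differentiable_on U \<Longrightarrow> (\<And>v. smooth_on U (\<lambda>x. dfun f x v)) \<Longrightarrow> smooth_on U f"

definition pbr :: "('a::euclidean_space \<Rightarrow> ('a \<Rightarrow> real) \<Rightarrow> 'a) \<Rightarrow> ('a \<Rightarrow> real) \<Rightarrow> ('a \<Rightarrow> real) \<Rightarrow> 'a \<Rightarrow> real" where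
  "pbr P f g x = dfun f x (P x (dfun g x))"

definition bivector_on :: "'a::euclidean_space set \<Rightarrow> ('a \<Rightarrow> ('a \<Rightarrow> real) \<Rightarrow> 'a) \<Rightarrow> bool" where
  "bivector_on U P \<longleftrightarrow>
     (\<forall>x\<in>U. \<forall>\<alpha> \<beta>. linear \<alpha> \<longrightarrow> linear \<beta> \<longrightarrow>
        (\<forall>a b. P x (\<lambda>v. a * \<alpha> v + b * \<beta> v) = a *\<^sub>R P x \<alpha> + b *\<^sub>R P x \<beta>) \<and>
        \<alpha> (P x \<beta>) = - \<beta> (P x \<alpha>)) \<and>
     (\<forall>f g. smooth_on U f \<longrightarrow> smooth_on U g \<longrightarrow> smooth_on U (pbr P f g))"

definition poisson_on :: "'a::euclidean_space set \<Rightarrow> ('a \<Rightarrow> ('a \<Rightarrow> real) \<Rightarrow> 'a) \<Rightarrow> bool" where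
  "poisson_on U P \<longleftrightarrow> bivector_on U P \<and>
     (\<forall>f g h. smooth_on U f \<longrightarrow> smooth_on U g \<longrightarrow> smooth_on U h \<longrightarrow>
        (\<forall>x\<in>U. pbr P f (pbr P g h) x + pbr P g (pbr P h f) x + pbr P h (pbr P f g) x = 0))"

definition pencil :: "('a::euclidean_space \<Rightarrow> ('a \<Rightarrow> real) \<Rightarrow> 'a) \<Rightarrow> ('a \<Rightarrow> ('a \<Rightarrow> real) \<Rightarrow> 'a) \<Rightarrow> real \<Rightarrow> 'a \<Rightarrow> ('a \<Rightarrow> real) \<Rightarrow> 'a" where
  "pencil P' P lam x \<alpha> = P' x \<alpha> - lam *\<^sub>R P x \<alpha>"

definition dHpoly :: "(nat \<Rightarrow> nat \<Rightarrow> 'a::euclidean_space \<Rightarrow> real) \<Rightarrow> (nat \<Rightarrow> nat) \<Rightarrow> nat \<Rightarrow> real \<Rightarrow> 'a \<Rightarrow> ('a \<Rightarrow> real)" where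
  "dHpoly H nn j lam x = (\<lambda>v. \<Sum>i\<le>nn j. lam ^ (nn j - i) * dfun (H j i) x v)"

text \<open>The modified bivector Q = P' - sum_a X'_a wedge Z_a, with X'_a = P' dH^(a)_0.\<close>
definition Qbiv :: "('a::euclidean_space \<Rightarrow> ('a \<Rightarrow> real) \<Rightarrow> 'a) \<Rightarrow> (nat \<Rightarrow> nat \<Rightarrow> 'a \<Rightarrow> real)
     \<Rightarrow> (nat \<Rightarrow> 'a \<Rightarrow> 'a) \<Rightarrow> nat \<Rightarrow> 'a \<Rightarrow> ('a \<Rightarrow> real) \<Rightarrow> 'a" where
  "Qbiv P' H Z k x \<alpha> =
     P' x \<alpha> + (\<Sum>a=1..k. \<alpha> (P' x (dfun (H a 0) x)) *\<^sub>R Z a x - \<alpha> (Z a x) *\<^sub>R P' x (dfun (H a 0) x))"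

end

theory Submission
  imports Defs
begin

text \<open>Comparing coefficients of \<open>\<lambda>\<close> in the Casimir equation \<open>(P' - \<lambda> P) dH(\<lambda>) = 0\<close>
gives the Lenard--Magri chain \<open>P dH\<^sub>0 = 0\<close>, \<open>P' dH\<^sub>s = P dH\<^sub>s\<^sub>+\<^sub>1\<close>, \<open>P' dH\<^sub>n = 0\<close>
for every family. Shifting indices along the chain with skew-symmetry shows that all
Hamiltonians are in involution for both \<open>P\<close> and \<open>P'\<close>; in particular every
\<open>X'\<^sub>a = P' dH\<^sub>0\<^sup>a\<close> is annihilated by every \<open>dH\<^sub>m\<^sup>b\<close>. So the correction
\<open>\<Sum> X'\<^sub>a \<and> Z\<^sub>a\<close> is invisible to the brackets of the Hamiltonians, and paired with
\<open>dH\<^sub>0\<^sup>b\<close> it contributes only \<open>\<langle>\<alpha>, X'\<^sub>b\<rangle>\<close> (as \<open>Z\<^sub>a(H\<^sub>0\<^sup>b) = \<delta>\<^sub>a\<^sub>b\<close>), which cancels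
\<open>\<langle>dH\<^sub>0\<^sup>b, P'\<alpha>\<rangle>\<close>.\<close>

lemma sum_atMost_rev: "(\<Sum>i\<le>n. g (n - i)) = (\<Sum>i\<le>(n::nat). g i)"
  using sum.atLeastAtMost_rev[of g 0 n] by (simp add: atLeast0AtMost)

lemma vector_polyfun_eq_0:
  fixes c :: "nat \<Rightarrow> 'a::real_inner"
  assumes "\<And>x::real. (\<Sum>i\<le>n. x ^ i *\<^sub>R c i) = 0"
  shows "i \<le> n \<Longrightarrow> c i = 0"
proof -
  have "\<forall>x::real. (\<Sum>i\<le>n. (c i \<bullet> u) * x ^ i) = 0" for u
    using arg_cong[OF assms, of "\<lambda>v. v \<bullet> u"] by (simp add: inner_sum_left mult.commute)
  then show "i \<le> n \<Longrightarrow> c i = 0"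
    using polyfun_eq_0 by (metis inner_eq_zero_iff)
qed

lemma pencil_kernel_coeffs:
  fixes A B :: "nat \<Rightarrow> 'a::real_inner"
  assumes kernel: "\<And>lam::real.
    (\<Sum>i\<le>n. lam ^ (n - i) *\<^sub>R A i) - lam *\<^sub>R (\<Sum>i\<le>n. lam ^ (n - i) *\<^sub>R B i) = 0"
  shows "B 0 = 0" and "A n = 0" and "s < n \<Longrightarrow> A s = B (Suc s)"
proof -
  define c where "c d = (if d \<le> n then A (n - d) else 0) - (if d = 0 then 0 else B (Suc n - d))" for d
  have "(\<Sum>d\<le>Suc n. lam ^ d *\<^sub>R c d) = 0" for lam :: real
  proof -
    have "(\<Sum>d\<le>Suc n. lam ^ d *\<^sub>R (if d \<le> n then A (n - d) else 0))
        = (\<Sum>d\<le>n. lam ^ d *\<^sub>R A (n - d))"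
      by (simp add: sum.atMost_Suc)
    moreover have "(\<Sum>d\<le>Suc n. lam ^ d *\<^sub>R (if d = 0 then 0 else B (Suc n - d)))
        = lam *\<^sub>R (\<Sum>d\<le>n. lam ^ d *\<^sub>R B (n - d))"
      by (subst sum.atMost_Suc_shift) (simp add: scaleR_sum_right)
    ultimately have "(\<Sum>d\<le>Suc n. lam ^ d *\<^sub>R c d)
        = (\<Sum>d\<le>n. lam ^ d *\<^sub>R A (n - d)) - lam *\<^sub>R (\<Sum>d\<le>n. lam ^ d *\<^sub>R B (n - d))"
      by (simp add: c_def scaleR_diff_right sum_subtractf)
    also have "\<dots> = 0"
      using kernel[of lam] sum_atMost_rev[of "\<lambda>i. lam ^ (n - i) *\<^sub>R A i" n]
        sum_atMost_rev[of "\<lambda>i. lam ^ (n - i) *\<^sub>R B i" n] by simp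
    finally show ?thesis .
  qed
  then have c0: "d \<le> Suc n \<Longrightarrow> c d = 0" for d
    by (rule vector_polyfun_eq_0)
  show "B 0 = 0" using c0[of "Suc n"] by (simp add: c_def)
  show "A n = 0" using c0[of 0] by (simp add: c_def)
  show "s < n \<Longrightarrow> A s = B (Suc s)" using c0[of "n - s"] by (simp add: c_def Suc_diff_le)
qed

lemma linear_dfun_smooth_on:
  assumes "smooth_on U f" "open U" "x \<in> U"
  shows "linear (dfun f x)"
proof -
  from assms(1) have "f differentiable_on U" by (cases rule: smooth_on.cases)
  then have "f differentiable (at x)"
    using assms(2,3) by (metis at_within_open differentiable_on_def)
  then show ?thesis
    unfolding dfun_def by (metis frechet_derivative_works has_derivative_linear)
qed

lemma bivector_on_lincomb:
  assumes "bivector_on U P" "x \<in> U" "linear \<alpha>" "linear \<beta>"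
  shows "P x (\<lambda>v. a * \<alpha> v + b * \<beta> v) = a *\<^sub>R P x \<alpha> + b *\<^sub>R P x \<beta>"
  using assms unfolding bivector_on_def by blast

lemma bivector_on_skew:
  assumes "bivector_on U P" "x \<in> U" "linear \<alpha>" "linear \<beta>"
  shows "\<alpha> (P x \<beta>) = - \<beta> (P x \<alpha>)"
  using assms unfolding bivector_on_def by blast

lemma bivector_on_sum:
  assumes "bivector_on U P" "x \<in> U" "finite I" "\<And>i. i \<in> I \<Longrightarrow> linear (\<alpha> i)"
  shows "P x (\<lambda>v. \<Sum>i\<in>I. c i * \<alpha> i v) = (\<Sum>i\<in>I. c i *\<^sub>R P x (\<alpha> i))"
  using assms(3,4)
proof (induction I rule: finite_induct)
  case empty
  have "P x (\<lambda>v. 0 * 0 + 0 * 0) = 0 *\<^sub>R P x (\<lambda>v. 0) + 0 *\<^sub>R P x (\<lambda>v. 0)"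
    using bivector_on_lincomb[OF assms(1,2)] linear_zero by blast
  then show ?case by simp
next
  case (insert i F)
  have "linear (\<lambda>v. \<Sum>i\<in>F. c i * \<alpha> i v)"
    using insert.prems linear_compose_scale_right[of "\<alpha> _" "c _"]
    by (auto intro!: linear_compose_sum)
  then have "P x (\<lambda>v. c i * \<alpha> i v + 1 * (\<Sum>i\<in>F. c i * \<alpha> i v))
      = c i *\<^sub>R P x (\<alpha> i) + 1 *\<^sub>R P x (\<lambda>v. \<Sum>i\<in>F. c i * \<alpha> i v)"
    using bivector_on_lincomb[OF assms(1,2)] insert.prems by blast
  then show ?case using insert by simp
qed

locale lenard_magri_chain =
  fixes J :: "nat set" and nn :: "nat \<Rightarrow> nat"
    and D :: "nat \<Rightarrow> nat \<Rightarrow> 'a::real_vector \<Rightarrow> real"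
    and P P' :: "('a \<Rightarrow> real) \<Rightarrow> 'a"
  assumes linear_D: "j \<in> J \<Longrightarrow> s \<le> nn j \<Longrightarrow> linear (D j s)"
    and skew_P: "linear \<alpha> \<Longrightarrow> linear \<beta> \<Longrightarrow> \<alpha> (P \<beta>) = - \<beta> (P \<alpha>)"
    and skew_P': "linear \<alpha> \<Longrightarrow> linear \<beta> \<Longrightarrow> \<alpha> (P' \<beta>) = - \<beta> (P' \<alpha>)"
    and P_D_first: "j \<in> J \<Longrightarrow> P (D j 0) = 0"
    and P'_D_last: "j \<in> J \<Longrightarrow> P' (D j (nn j)) = 0"
    and P'_D_shift: "j \<in> J \<Longrightarrow> s < nn j \<Longrightarrow> P' (D j s) = P (D j (Suc s))"
begin

lemma involution_P:
  assumes i: "i \<in> J" and j: "j \<in> J"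
  shows "l \<le> nn i \<Longrightarrow> m \<le> nn j \<Longrightarrow> D i l (P (D j m)) = 0"
proof (induction m arbitrary: l)
  case 0
  then show ?case using P_D_first[OF j] by (simp add: linear_0[OF linear_D[OF i]])
next
  case (Suc m)
  have "D i l (P (D j (Suc m))) = D i l (P' (D j m))"
    using P'_D_shift[OF j] Suc.prems by simp
  also have "\<dots> = - D j m (P' (D i l))"
    using skew_P' linear_D i j Suc.prems by simp
  also have "\<dots> = 0"
  proof (cases "l = nn i")
    case True
    then show ?thesis using P'_D_last[OF i] Suc.prems by (simp add: linear_0[OF linear_D[OF j]])
  next
    case False
    then have "- D j m (P' (D i l)) = - D j m (P (D i (Suc l)))"
      using P'_D_shift[OF i] Suc.prems by simp
    also have "\<dots> = D i (Suc l) (P (D j m))"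
      using skew_P linear_D i j Suc.prems False by simp
    also have "\<dots> = 0"
      using Suc False by simp
    finally show ?thesis .
  qed
  finally show ?case .
qed

lemma involution_P':
  assumes "i \<in> J" "j \<in> J" "l \<le> nn i" "m \<le> nn j"
  shows "D i l (P' (D j m)) = 0"
proof (cases "m = nn j")
  case True
  then show ?thesis using P'_D_last assms by (simp add: linear_0[OF linear_D[OF assms(1,3)]])
next
  case False
  then show ?thesis using P'_D_shift involution_P[of i j l "Suc m"] assms by simp
qed

end

lemma lenard_magri_chain_of_casimirs:
  fixes P P' :: "'a::euclidean_space \<Rightarrow> ('a \<Rightarrow> real) \<Rightarrow> 'a"
  assumes P: "bivector_on U P" and P': "bivector_on U P'" and x: "x \<in> U"
    and linear_dH: "\<And>j s. j \<in> J \<Longrightarrow> s \<le> nn j \<Longrightarrow> linear (dfun (H j s) x)"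
    and casimir: "\<And>j lam. j \<in> J \<Longrightarrow> pencil P' P lam x (dHpoly H nn j lam x) = 0"
  shows "lenard_magri_chain J nn (\<lambda>j s. dfun (H j s) x) (P x) (P' x)"
proof -
  have kernel: "(\<Sum>i\<le>nn j. lam ^ (nn j - i) *\<^sub>R P' x (dfun (H j i) x))
      - lam *\<^sub>R (\<Sum>i\<le>nn j. lam ^ (nn j - i) *\<^sub>R P x (dfun (H j i) x)) = 0"
    if j: "j \<in> J" for j lam
    using casimir[OF j, of lam] linear_dH[OF j]
      bivector_on_sum[OF P x, of "{..nn j}"] bivector_on_sum[OF P' x, of "{..nn j}"]
    unfolding pencil_def dHpoly_def by simp
  show ?thesis
  proof (rule lenard_magri_chain.intro)
    show "linear (dfun (H j s) x)" if "j \<in> J" "s \<le> nn j" for j s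
      using linear_dH that .
    show "\<alpha> (P x \<beta>) = - \<beta> (P x \<alpha>)" "\<alpha> (P' x \<beta>) = - \<beta> (P' x \<alpha>)"
      if "linear \<alpha>" "linear \<beta>" for \<alpha> \<beta> :: "'a \<Rightarrow> real"
      using bivector_on_skew[OF P x that] bivector_on_skew[OF P' x that] by auto
    show "P x (dfun (H j 0) x) = 0" "P' x (dfun (H j (nn j)) x) = 0" if "j \<in> J" for j
      using pencil_kernel_coeffs(1,2)[OF kernel[OF that]] by auto
    show "P' x (dfun (H j s) x) = P x (dfun (H j (Suc s)) x)" if "j \<in> J" "s < nn j" for j s
      using pencil_kernel_coeffs(3)[OF kernel[OF that(1)] that(2)] .
  qed
qed

lemma Qbiv_apply:
  assumes "linear \<beta>"
  shows "\<beta> (Qbiv P' H Z k x \<alpha>) = \<beta> (P' x \<alpha>) + (\<Sum>a=1..k.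
    \<alpha> (P' x (dfun (H a 0) x)) * \<beta> (Z a x) - \<alpha> (Z a x) * \<beta> (P' x (dfun (H a 0) x)))"
  unfolding Qbiv_def using assms by (simp add: linear_add linear_sum linear_diff linear_scale)

lemma Qbiv_involution:
  assumes "lenard_magri_chain {1..k} nn (\<lambda>j s. dfun (H j s) x) (P x) (P' x)"
    and "a \<in> {1..k}" "b \<in> {1..k}" "l \<le> nn a" "m \<le> nn b"
  shows "dfun (H a l) x (Qbiv P' H Z k x (dfun (H b m) x)) = 0"
proof -
  interpret lenard_magri_chain "{1..k}" nn "\<lambda>j s. dfun (H j s) x" "P x" "P' x"
    by (fact assms(1))
  show ?thesis
    using Qbiv_apply[OF linear_D] involution_P' assms(2-) by simp
qed

lemma Qbiv_tangent:
  assumes "lenard_magri_chain {1..k} nn (\<lambda>j s. dfun (H j s) x) (P x) (P' x)"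
    and b: "b \<in> {1..k}" and "linear \<alpha>"
    and Z_norm: "\<And>a. a \<in> {1..k} \<Longrightarrow> dfun (H b 0) x (Z a x) = (if a = b then 1 else 0)"
  shows "dfun (H b 0) x (Qbiv P' H Z k x \<alpha>) = 0"
proof -
  interpret lenard_magri_chain "{1..k}" nn "\<lambda>j s. dfun (H j s) x" "P x" "P' x"
    by (fact assms(1))
  have "\<alpha> (P' x (dfun (H a 0) x)) * dfun (H b 0) x (Z a x)
        - \<alpha> (Z a x) * dfun (H b 0) x (P' x (dfun (H a 0) x))
      = (if a = b then \<alpha> (P' x (dfun (H a 0) x)) else 0)" if "a \<in> {1..k}" for a
    using involution_P'[OF b that le0 le0] Z_norm[OF that] by simp
  then have "dfun (H b 0) x (Qbiv P' H Z k x \<alpha>)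
      = dfun (H b 0) x (P' x \<alpha>) + (\<Sum>a=1..k. if a = b then \<alpha> (P' x (dfun (H a 0) x)) else 0)"
    using Qbiv_apply[OF linear_D[OF b le0], of P' H Z k x \<alpha>] sum.cong by simp
  also have "\<dots> = dfun (H b 0) x (P' x \<alpha>) + \<alpha> (P' x (dfun (H b 0) x))"
    using b by simp
  also have "\<dots> = 0"
    using skew_P'[OF linear_D[OF b le0] \<open>linear \<alpha>\<close>] by simp
  finally show ?thesis .
qed

theorem theorem1:
  fixes U :: "'a::euclidean_space set"
    and P P' :: "'a \<Rightarrow> ('a \<Rightarrow> real) \<Rightarrow> 'a"
    and H :: "nat \<Rightarrow> nat \<Rightarrow> 'a \<Rightarrow> real"
    and nn :: "nat \<Rightarrow> nat"
    and k n :: nat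
    and Z :: "nat \<Rightarrow> 'a \<Rightarrow> 'a"
    and c :: "nat \<Rightarrow> real"
    and S :: "'a set"
  assumes U_open: "open U"
    and dim: "DIM('a) = 2 * n + k"
    and n_sum: "(\<Sum>j=1..k. nn j) = n"
    and P_poisson: "poisson_on U P"
    and P'_poisson: "poisson_on U P'"
    and compatible: "\<forall>lam. poisson_on U (pencil P' P lam)"
    and H_smooth: "\<forall>j\<in>{1..k}. \<forall>s\<le>nn j. smooth_on U (H j s)"
    and casimir: "\<forall>j\<in>{1..k}. \<forall>x\<in>U. \<forall>lam.
                    pencil P' P lam x (dHpoly H nn j lam x) = 0"
    and indep: "\<forall>x\<in>U. \<forall>coef :: nat \<Rightarrow> nat \<Rightarrow> real.
                  (\<forall>v. (\<Sum>j=1..k. \<Sum>s\<le>nn j. coef j s * dfun (H j s) x v) = 0) \<longrightarrow>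
                  (\<forall>j\<in>{1..k}. \<forall>s\<le>nn j. coef j s = 0)"
    and leaves: "\<forall>x\<in>U. {P x \<alpha> | \<alpha>. linear \<alpha>} = {v. \<forall>b\<in>{1..k}. dfun (H b 0) x v = 0}"
    and S_def: "S = {p\<in>U. \<forall>b\<in>{1..k}. H b 0 p = c b}"
    and Z_smooth: "\<forall>a\<in>{1..k}. \<forall>f. smooth_on U f \<longrightarrow> smooth_on U (\<lambda>x. dfun f x (Z a x))"
    and Z_transversal: "\<forall>x\<in>U. \<forall>v. \<exists>!coef :: nat \<Rightarrow> real.
                  (\<forall>a. a \<notin> {1..k} \<longrightarrow> coef a = 0) \<and>
                  (\<forall>b\<in>{1..k}. dfun (H b 0) x (v - (\<Sum>a=1..k. coef a *\<^sub>R Z a x)) = 0)"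
    and Z_norm: "\<forall>x\<in>U. \<forall>a\<in>{1..k}. \<forall>b\<in>{1..k}.
                  dfun (H b 0) x (Z a x) = (if a = b then 1 else 0)"
  shows "(\<forall>p\<in>S. \<forall>\<alpha>. linear \<alpha> \<longrightarrow> (\<forall>b\<in>{1..k}. dfun (H b 0) p (Qbiv P' H Z k p \<alpha>) = 0))
       \<and> (\<forall>x\<in>U. \<forall>a\<in>{1..k}. \<forall>b\<in>{1..k}. \<forall>l\<le>nn a. \<forall>m\<le>nn b.
            dfun (H a l) x (Qbiv P' H Z k x (dfun (H b m) x)) = 0)"
proof -
  have bivectors: "bivector_on U P" "bivector_on U P'"
    using P_poisson P'_poisson by (simp_all add: poisson_on_def)
  have chain: "lenard_magri_chain {1..k} nn (\<lambda>j s. dfun (H j s) x) (P x) (P' x)"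
    if x: "x \<in> U" for x
  proof (rule lenard_magri_chain_of_casimirs[OF bivectors x])
    show "linear (dfun (H j s) x)" if "j \<in> {1..k}" "s \<le> nn j" for j s
      using linear_dfun_smooth_on H_smooth U_open x that by blast
    show "pencil P' P lam x (dHpoly H nn j lam x) = 0" if "j \<in> {1..k}" for j lam
      using casimir x that by blast
  qed
  have "\<forall>p\<in>S. \<forall>\<alpha>. linear \<alpha> \<longrightarrow> (\<forall>b\<in>{1..k}. dfun (H b 0) p (Qbiv P' H Z k p \<alpha>) = 0)"
  proof (intro ballI allI impI)
    fix p b and \<alpha> :: "'a \<Rightarrow> real"
    assume p: "p \<in> S" and "linear \<alpha>" "b \<in> {1..k}"
    from p have "p \<in> U" unfolding S_def by blast
    then show "dfun (H b 0) p (Qbiv P' H Z k p \<alpha>) = 0"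
      using Qbiv_tangent[where P=P and P'=P' and x=p, OF chain] Z_norm \<open>linear \<alpha>\<close>
        \<open>b \<in> {1..k}\<close> by blast
  qed
  moreover have "\<forall>x\<in>U. \<forall>a\<in>{1..k}. \<forall>b\<in>{1..k}. \<forall>l\<le>nn a. \<forall>m\<le>nn b.
      dfun (H a l) x (Qbiv P' H Z k x (dfun (H b m) x)) = 0"
    using Qbiv_involution[where P=P and P'=P', OF chain] by blast
  ultimately show ?thesis ..
qed

end
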